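(* Let $S$ be a monoid in which the unique maximal right ideal $\mathfrak{M}$ is a two-sided ideal. Let $A$ be a finitely generated quasi-strongly faithful right $S$-act with a unique zero element $\theta$. If $AI=A$ for some proper right ideal $I$ of $S$, then $A=\{\theta\}$.
   Context: $S$ is a monoid with identity $1$ having at least one right non-invertible element. A (right) $S$-act is a nonempty set $A$ with a map $A\times S\to A$, $(a,s)\mapsto as$, such that $a1=a$ and $a(st)=(as)t$ for all $a\in A$, $s,t\in S$. An element $\theta\in A$ is a zero if $\theta s=\theta$ for all $s\in S$. $\mathfrak{M}=\{s\in S \mid st\neq 1 \text{ for all } t\in S\}$ is the set of right non-invertible elements; it is the unique maximal right ideal of $S$, and every proper right ideal is contained in it. For a right ideal $I$, $AI=\{as\mid a\in A,\ s\in I\}$. $A$ is finitely generated if there is a finite $X\subseteq A$ with $A=\bigcup_{x\in X}xS$. An $S$-act $A$ is called quasi-strongly faithful if for $a\in A$ and $s\in S$, the equality $as=a$ implies $s\notin\mathfrak{M}$ (when $A$ has a unique zero $\theta$, this is required only for $a\neq\theta$). *)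

theory Defs
  imports Main
begin

definition right_act :: "'a set \<Rightarrow> ('a \<Rightarrow> 's::monoid_mult \<Rightarrow> 'a) \<Rightarrow> bool" where
  "right_act A act \<longleftrightarrow> A \<noteq> {} \<and> (\<forall>a\<in>A. \<forall>s. act a s \<in> A)
     \<and> (\<forall>a\<in>A. act a 1 = a) \<and> (\<forall>a\<in>A. \<forall>s t. act a (s * t) = act (act a s) t)"

definition right_noninv :: "'s::monoid_mult set" where
  "right_noninv = {s. \<forall>t. s * t \<noteq> 1}"

definition right_ideal :: "'s::monoid_mult set \<Rightarrow> bool" where
  "right_ideal I \<longleftrightarrow> I \<noteq> {} \<and> (\<forall>s\<in>I. \<forall>t. s * t \<in> I)"

definition left_ideal :: "'s::monoid_mult set \<Rightarrow> bool" where
  "left_ideal I \<longleftrightarrow> I \<noteq> {} \<and> (\<forall>s\<in>I. \<forall>t. t * s \<in> I)"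

definition two_sided_ideal :: "'s::monoid_mult set \<Rightarrow> bool" where
  "two_sided_ideal I \<longleftrightarrow> right_ideal I \<and> left_ideal I"

definition is_zero :: "'a set \<Rightarrow> ('a \<Rightarrow> 's \<Rightarrow> 'a) \<Rightarrow> 'a \<Rightarrow> bool" where
  "is_zero A act z \<longleftrightarrow> z \<in> A \<and> (\<forall>s. act z s = z)"

definition act_ideal :: "'a set \<Rightarrow> ('a \<Rightarrow> 's \<Rightarrow> 'a) \<Rightarrow> 's set \<Rightarrow> 'a set" where
  "act_ideal A act I = {act a s | a s. a \<in> A \<and> s \<in> I}"

definition fin_gen :: "'a set \<Rightarrow> ('a \<Rightarrow> 's \<Rightarrow> 'a) \<Rightarrow> bool" where
  "fin_gen A act \<longleftrightarrow> (\<exists>X. finite X \<and> X \<subseteq> A \<and> A = (\<Union>x\<in>X. {act x s | s. True}))"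

definition quasi_strongly_faithful_zero ::
  "'a set \<Rightarrow> ('a \<Rightarrow> 's::monoid_mult \<Rightarrow> 'a) \<Rightarrow> 'a \<Rightarrow> bool" where
  "quasi_strongly_faithful_zero A act z \<longleftrightarrow>
     (\<forall>a\<in>A. \<forall>s. a \<noteq> z \<and> act a s = a \<longrightarrow> s \<notin> right_noninv)"

end

theory Submission
  imports Defs
begin

text \<open>Since the set \<open>M\<close> of right non-invertible elements is a left ideal containing \<open>I\<close>,
  \<open>AI = A\<close> writes every nonzero generator as \<open>y m\<close> with \<open>y\<close> a nonzero generator and
  \<open>m \<in> M\<close>. As \<open>M\<close> is also a right ideal, this relation between generators is transitive,
  so finiteness of the generating set forces a generator with \<open>x = x m\<close>, \<open>m \<in> M\<close>, which
  quasi-strong faithfulness forbids. Hence all generators are \<open>\<theta>\<close> and \<open>A = \<theta>S = {\<theta>}\<close>.\<close>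

lemma right_ideal_subset_right_noninv:
  assumes "right_ideal I" and "I \<noteq> UNIV"
  shows "I \<subseteq> right_noninv"
proof
  fix s assume s: "s \<in> I"
  show "s \<in> right_noninv" unfolding right_noninv_def
  proof (intro CollectI allI notI)
    fix t assume "s * t = 1"
    then have "1 \<in> I" using s assms(1) unfolding right_ideal_def by metis
    then have "I = UNIV" using assms(1) unfolding right_ideal_def by (metis UNIV_eq_I mult_1)
    with assms(2) show False by contradiction
  qed
qed

lemma finite_transp_successor_loop:
  assumes "finite X" "X \<noteq> {}" "\<forall>x\<in>X. \<exists>y\<in>X. R x y" "transp R"
  shows "\<exists>x\<in>X. R x x"
proof (rule ccontr)
  assume no_loop: "\<not> (\<exists>x\<in>X. R x x)"
  define r where "r = {(y, x). x \<in> X \<and> y \<in> X \<and> R x y}"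
  have "finite r" unfolding r_def
    by (rule finite_subset[of _ "X \<times> X"]) (auto simp: assms(1))
  moreover have "trans r" using assms(4) unfolding r_def trans_def transp_def by blast
  then have "acyclic r" unfolding acyclic_def trancl_id[OF \<open>trans r\<close>]
    using no_loop unfolding r_def by blast
  ultimately have "wf r" using finite_acyclic_wf by blast
  then obtain z where "z \<in> X" "\<forall>y. (y, z) \<in> r \<longrightarrow> y \<notin> X"
    using wfE_min[of r _ X] assms(2) by blast
  then show False using assms(3) unfolding r_def by blast
qed

lemma act_ideal_eq_imp_generator_multiple:
  assumes "right_act A act" and "X \<subseteq> A" and "A = (\<Union>x\<in>X. {act x s | s. True})"
    and "left_ideal M" and "I \<subseteq> M" and "act_ideal A act I = A" and "a \<in> A"
  shows "\<exists>x\<in>X. \<exists>m\<in>M. a = act x m"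
proof -
  obtain b i where "b \<in> A" "i \<in> I" "a = act b i"
    using assms(6,7) unfolding act_ideal_def by blast
  moreover obtain x s where "x \<in> X" "b = act x s" using \<open>b \<in> A\<close> assms(3) by blast
  ultimately have "a = act x (s * i)" and "s * i \<in> M"
    using assms(1,2,4,5) unfolding right_act_def left_ideal_def by auto
  then show ?thesis using \<open>x \<in> X\<close> by blast
qed

theorem theorem2p11:
  fixes A :: "'a set" and act :: "'a \<Rightarrow> 's::monoid_mult \<Rightarrow> 'a" and \<theta> :: 'a
    and I :: "'s set"
  assumes "\<exists>s::'s. s \<in> right_noninv"
    and "two_sided_ideal (right_noninv :: 's set)"
    and "right_act A act"
    and "fin_gen A act"
    and "is_zero A act \<theta>"
    and "\<forall>z. is_zero A act z \<longrightarrow> z = \<theta>"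
    and "quasi_strongly_faithful_zero A act \<theta>"
    and "right_ideal I" and "I \<noteq> UNIV"
    and "act_ideal A act I = A"
  shows "A = {\<theta>}"
proof -
  obtain X where X: "finite X" "X \<subseteq> A" "A = (\<Union>x\<in>X. {act x s | s. True})"
    using assms(4) unfolding fin_gen_def by blast
  have zero: "\<theta> \<in> A" "\<And>s. act \<theta> s = \<theta>" using assms(5) unfolding is_zero_def by auto
  define R where "R x y \<longleftrightarrow> y \<in> A \<and> (\<exists>m\<in>right_noninv. x = act y m)" for x y
  have "X - {\<theta>} = {}"
  proof (rule ccontr)
    assume "X - {\<theta>} \<noteq> {}"
    moreover have "\<forall>x\<in>X - {\<theta>}. \<exists>y\<in>X - {\<theta>}. R x y"
      using act_ideal_eq_imp_generator_multiple[OF assms(3) X(2,3) _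
          right_ideal_subset_right_noninv[OF assms(8,9)] assms(10)]
        assms(2) X(2) zero(2) unfolding two_sided_ideal_def R_def by blast
    moreover have "transp R"
      using assms(2,3) unfolding transp_def R_def two_sided_ideal_def right_ideal_def right_act_def
      by (metis (lifting))
    ultimately obtain x where "x \<in> X - {\<theta>}" "R x x"
      using finite_transp_successor_loop X(1) by (metis finite_Diff)
    then show False using assms(7) unfolding R_def quasi_strongly_faithful_zero_def
      by (metis DiffD2 singletonI)
  qed
  then show ?thesis using X(3) zero assms(3) unfolding right_act_def by auto
qed

end
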